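(* There is a mapping $\Phi :(\mathfrak{M}, \supseteq )\rightarrow (\mathfrak{M_H}, \supseteq )$ such that for every $I\in \mathfrak{M}$, $\Phi (I)\supseteq I$ and $\Phi (I)\approx _{\mathrm{sep}} I$.
   Context: All ideals on $\omega$ considered are proper and contain all finite subsets of $\omega$; they are viewed as subsets of the Cantor space $2^\omega=\mathcal{P}(\omega)$. $\mathfrak{M}$ is the set of all ideals on $\omega$ that are meager subsets of $2^\omega$, ordered by reverse inclusion $\supseteq$ (so larger ideals are stronger conditions). For $X\subseteq\omega$ and an ideal $I$, $I\upharpoonright X=\{A\in I: A\subseteq X\}$, and $I^+=\mathcal{P}(\omega)\setminus I$. An ideal $I$ is hereditary meager if for every $X\in I^+$ the set $I\upharpoonright X$ is meager in $2^X$; $\mathfrak{M_H}$ is the set of hereditary meager ideals ordered by $\supseteq$. Two meager ideals are compatible (in $(\mathfrak{M},\supseteq)$) if some meager ideal contains both, and disjoint otherwise. For $I,J\in\mathfrak{M}$, $I\approx_{\mathrm{sep}}J$ means: for every meager ideal $K$, $K$ is disjoint with $I$ iff $K$ is disjoint with $J$. *)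

theory Defs
  imports "HOL-Analysis.Analysis"
begin

definition is_ideal :: "nat set set \<Rightarrow> bool" where
  "is_ideal I \<longleftrightarrow>
     (\<forall>A B. A \<in> I \<longrightarrow> B \<subseteq> A \<longrightarrow> B \<in> I) \<and>
     (\<forall>A B. A \<in> I \<longrightarrow> B \<in> I \<longrightarrow> A \<union> B \<in> I) \<and>
     (\<forall>A. finite A \<longrightarrow> A \<in> I) \<and>
     UNIV \<notin> I"

text \<open>Cantor space 2^omega: nat => bool with the product topology (bool discrete);
  a set A of naturals is identified with its characteristic function.\<close>
definition cantor :: "(nat \<Rightarrow> bool) topology" where
  "cantor = product_topology (\<lambda>_. euclidean) UNIV"

definition code :: "nat set \<Rightarrow> (nat \<Rightarrow> bool)" where
  "code A = (\<lambda>n. n \<in> A)"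

definition nowhere_dense_in :: "'a topology \<Rightarrow> 'a set \<Rightarrow> bool" where
  "nowhere_dense_in X S \<longleftrightarrow> S \<subseteq> topspace X \<and> X interior_of (X closure_of S) = {}"

definition meager_in :: "'a topology \<Rightarrow> 'a set \<Rightarrow> bool" where
  "meager_in X S \<longleftrightarrow>
     (\<exists>F. countable F \<and> (\<forall>N\<in>F. nowhere_dense_in X N) \<and> S \<subseteq> \<Union>F)"

definition meager_fam :: "nat set set \<Rightarrow> bool" where
  "meager_fam \<A> \<longleftrightarrow> meager_in cantor (code ` \<A>)"

text \<open>2^X is identified with P(X), a (closed) subspace of 2^omega.\<close>
definition meager_fam_on :: "nat set \<Rightarrow> nat set set \<Rightarrow> bool" where
  "meager_fam_on X \<A> \<longleftrightarrow> meager_in (subtopology cantor (code ` Pow X)) (code ` \<A>)"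

definition restr :: "nat set set \<Rightarrow> nat set \<Rightarrow> nat set set" where
  "restr I X = {A \<in> I. A \<subseteq> X}"

definition MI :: "nat set set set" where
  "MI = {I. is_ideal I \<and> meager_fam I}"

definition MH :: "nat set set set" where
  "MH = {I. is_ideal I \<and> (\<forall>X. X \<notin> I \<longrightarrow> meager_fam_on X (restr I X))}"

definition compatible_ideals :: "nat set set \<Rightarrow> nat set set \<Rightarrow> bool" where
  "compatible_ideals I J \<longleftrightarrow> (\<exists>K\<in>MI. I \<subseteq> K \<and> J \<subseteq> K)"

definition disjoint_ideals :: "nat set set \<Rightarrow> nat set set \<Rightarrow> bool" where
  "disjoint_ideals I J \<longleftrightarrow> \<not> compatible_ideals I J"

definition sep_equiv :: "nat set set \<Rightarrow> nat set set \<Rightarrow> bool" where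
  "sep_equiv I J \<longleftrightarrow> (\<forall>K\<in>MI. disjoint_ideals K I \<longleftrightarrow> disjoint_ideals K J)"

end

theory Submission
  imports Defs
begin

text \<open>
  By Talagrand's characterisation, a family \<open>L\<close> closed under subsets is meager iff some sequence
  of finite blocks \<open>P n \<subseteq> {n..}\<close> is avoided by \<open>L\<close>: every member of \<open>L\<close> contains only
  finitely many blocks. Call an ideal \<open>J \<supseteq> I\<close> meager-preserving for \<open>I\<close> if joining \<open>J\<close>
  to any ideal \<open>L \<supseteq> I\<close> keeps every block sequence avoided by \<open>L\<close> avoided. Then the join of
  \<open>J\<close> with a meager ideal containing \<open>I\<close> is again meager, so \<open>J\<close> and \<open>I\<close> are compatible
  with the same meager ideals, i.e. \<open>J \<approx>\<^sub>s\<^sub>e\<^sub>p I\<close>. Meager-preserving ideals are closed under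
  unions of chains, and \<open>\<Phi> I\<close> is a maximal one given by Zorn's lemma. It is hereditarily
  meager: if \<open>J\<restriction>X\<close> were non-meager in \<open>2\<^sup>X\<close> for some \<open>X \<notin> J\<close>, then adjoining \<open>X\<close> to \<open>J\<close>
  would keep it meager-preserving, contradicting maximality. Indeed, the blocks lying in some
  \<open>A \<union> X\<close> but not in \<open>A\<close> leave nonempty traces on \<open>X\<close>, and a non-meager \<open>L\<restriction>X\<close> cannot
  avoid infinitely many of these traces.
\<close>

definition cylinder :: "nat set \<Rightarrow> (nat \<Rightarrow> bool) \<Rightarrow> (nat \<Rightarrow> bool) set" where
  "cylinder D f = {g. \<forall>i\<in>D. g i = f i}"

lemma topspace_cantor [simp]: "topspace cantor = UNIV"
  by (simp add: cantor_def)

lemma cylinder_self: "f \<in> cylinder D f"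
  by (simp add: cylinder_def)

lemma cylinder_antimono: "D \<subseteq> E \<Longrightarrow> cylinder E f \<subseteq> cylinder D f"
  by (auto simp: cylinder_def)

lemma openin_cylinder: "finite D \<Longrightarrow> openin cantor (cylinder D f)"
  unfolding cantor_def openin_product_topology_alt
proof
  fix x assume "finite D" "x \<in> cylinder D f"
  define U where "U i = (if i \<in> D then {f i} else UNIV)" for i
  have "{i \<in> UNIV. U i \<noteq> topspace euclidean} \<subseteq> D"
    by (auto simp: U_def)
  with \<open>finite D\<close> have "finite {i \<in> UNIV. U i \<noteq> topspace euclidean}"
    by (rule finite_subset[rotated])
  moreover have "\<forall>i\<in>UNIV. openin euclidean (U i)"
    by (simp add: U_def open_discrete)
  moreover have "x \<in> Pi\<^sub>E UNIV U"
    using \<open>x \<in> cylinder D f\<close> by (simp add: U_def cylinder_def PiE_iff)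
  moreover have "Pi\<^sub>E UNIV U \<subseteq> cylinder D f"
  proof
    fix h assume "h \<in> Pi\<^sub>E UNIV U"
    then have "h i \<in> U i" for i
      by (simp add: PiE_iff)
    then have "h i = f i" if "i \<in> D" for i
      using that by (metis U_def singletonD)
    then show "h \<in> cylinder D f"
      by (simp add: cylinder_def)
  qed
  ultimately show "\<exists>U. finite {i \<in> UNIV. U i \<noteq> topspace euclidean} \<and>
      (\<forall>i\<in>UNIV. openin euclidean (U i)) \<and> x \<in> Pi\<^sub>E UNIV U \<and> Pi\<^sub>E UNIV U \<subseteq> cylinder D f"
    by blast
qed

lemma openin_cantor_cylinder_subset:
  assumes "openin cantor W" "x \<in> W"
  obtains D where "finite D" "cylinder D x \<subseteq> W"
proof -
  obtain U where U: "finite {i \<in> UNIV. U i \<noteq> topspace (euclidean::bool topology)}"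
      "x \<in> Pi\<^sub>E UNIV U" "Pi\<^sub>E UNIV U \<subseteq> W"
    using assms unfolding cantor_def openin_product_topology_alt by blast
  define D where "D = {i \<in> UNIV. U i \<noteq> topspace (euclidean::bool topology)}"
  have "cylinder D x \<subseteq> Pi\<^sub>E UNIV U"
  proof
    fix g assume g: "g \<in> cylinder D x"
    have "g i \<in> U i" for i
    proof (cases "i \<in> D")
      case True
      then have "g i = x i" using g by (simp add: cylinder_def)
      then show ?thesis using U(2) by (simp add: PiE_iff)
    next
      case False
      then show ?thesis by (simp add: D_def)
    qed
    then show "g \<in> Pi\<^sub>E UNIV U" by (simp add: PiE_iff)
  qed
  with U(1,3) show thesis
    using that[of D] unfolding D_def by blast
qed

lemma nowhere_dense_inI:
  assumes "S \<subseteq> topspace X"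
    and "\<And>W. openin X W \<Longrightarrow> W \<noteq> {} \<Longrightarrow> \<exists>V. openin X V \<and> V \<noteq> {} \<and> V \<subseteq> W \<and> V \<inter> S = {}"
  shows "nowhere_dense_in X S"
  unfolding nowhere_dense_in_def
proof (intro conjI assms(1))
  show "X interior_of (X closure_of S) = {}"
  proof (rule ccontr)
    assume "X interior_of (X closure_of S) \<noteq> {}"
    then obtain V where V: "openin X V" "V \<noteq> {}" "V \<subseteq> X interior_of (X closure_of S)" "V \<inter> S = {}"
      using assms(2)[OF openin_interior_of] by blast
    then obtain v where v: "v \<in> V" by blast
    have "v \<in> X closure_of S"
      using V(3) v interior_of_subset[of X "X closure_of S"] by blast
    then show False
      using V(1,4) v unfolding in_closure_of by blast
  qed
qed

lemma nowhere_dense_inD: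
  assumes "nowhere_dense_in X S" "openin X W" "W \<noteq> {}"
  obtains V where "openin X V" "V \<noteq> {}" "V \<subseteq> W" "V \<inter> S = {}"
proof -
  have "openin X (W - X closure_of S)"
    using assms(2) by (simp add: openin_diff)
  moreover have "W - X closure_of S \<noteq> {}"
  proof
    assume "W - X closure_of S = {}"
    then have "W \<subseteq> X closure_of S" by blast
    then have "W \<subseteq> X interior_of (X closure_of S)"
      using assms(2) by (rule interior_of_maximal)
    then show False
      using assms(1,3) by (auto simp: nowhere_dense_in_def)
  qed
  moreover have "(W - X closure_of S) \<inter> S = {}"
    using assms(1) closure_of_subset[of S X] unfolding nowhere_dense_in_def by blast
  ultimately show thesis
    using that[of "W - X closure_of S"] by blast
qed

lemma code_apply [simp]: "code A i = (i \<in> A)"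
  by (simp add: code_def)

lemma range_code: "range code = UNIV"
proof -
  have "f = code {n. f n}" for f by (simp add: code_def)
  then show ?thesis by blast
qed

section \<open>Block sequences witnessing meagerness\<close>

definition block_sequence :: "(nat \<Rightarrow> nat set) \<Rightarrow> bool" where
  "block_sequence P \<longleftrightarrow> (\<forall>n. finite (P n) \<and> P n \<noteq> {} \<and> P n \<subseteq> {n..})"

definition avoids :: "nat set set \<Rightarrow> (nat \<Rightarrow> nat set) \<Rightarrow> bool" where
  "avoids L P \<longleftrightarrow> (\<forall>A\<in>L. finite {n. P n \<subseteq> A})"

lemma avoids_antimono: "M \<subseteq> L \<Longrightarrow> avoids L P \<Longrightarrow> avoids M P"
  unfolding avoids_def by blast

lemma avoids_imp_UNIV_notin: "block_sequence P \<Longrightarrow> avoids L P \<Longrightarrow> UNIV \<notin> L"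
  unfolding avoids_def block_sequence_def by auto

lemma block_sequence_subsequence:
  assumes "block_sequence P" "strict_mono e" "\<And>k. P (e k) \<inter> X \<noteq> {}"
  shows "block_sequence (\<lambda>k. P (e k) \<inter> X)"
  unfolding block_sequence_def
proof (intro allI conjI)
  fix k
  have "finite (P (e k))" "P (e k) \<subseteq> {e k..}"
    using assms(1) unfolding block_sequence_def by blast+
  moreover have "k \<le> e k"
    using assms(2) by (rule strict_mono_imp_increasing)
  ultimately show "finite (P (e k) \<inter> X)" "P (e k) \<inter> X \<subseteq> {k..}"
    by auto
  show "P (e k) \<inter> X \<noteq> {}"
    by (rule assms(3))
qed

lemma strict_mono_block_sequence:
  assumes "strict_mono b"
  shows "block_sequence (\<lambda>k. {b k..<b (Suc k)})"
  unfolding block_sequence_def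
proof (intro allI conjI)
  fix k
  show "finite {b k..<b (Suc k)}" by simp
  show "{b k..<b (Suc k)} \<noteq> {}"
    using assms by (simp add: strict_mono_Suc_iff)
  show "{b k..<b (Suc k)} \<subseteq> {k..}"
    using strict_mono_imp_increasing[OF assms, of k] by auto
qed

lemma nowhere_dense_in_Pow_block_free:
  assumes P: "block_sequence P" "\<And>n. P n \<subseteq> X"
  shows "nowhere_dense_in (subtopology cantor (code ` Pow X))
           (code ` {A. A \<subseteq> X \<and> (\<forall>n\<ge>m. \<not> P n \<subseteq> A)})"
    (is "nowhere_dense_in ?T (code ` ?F)")
proof (rule nowhere_dense_inI)
  have "?F \<subseteq> Pow X" by blast
  then show "code ` ?F \<subseteq> topspace ?T" by auto
next
  fix W assume W: "openin ?T W" "W \<noteq> {}"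
  obtain U where U: "openin cantor U" "W = U \<inter> code ` Pow X"
    using W(1) unfolding openin_subtopology by blast
  obtain B where B: "B \<subseteq> X" "code B \<in> W"
    using W(2) U(2) by blast
  obtain D where D: "finite D" "cylinder D (code B) \<subseteq> U"
    using openin_cantor_cylinder_subset[OF U(1)] B(2) U(2) by blast
  obtain b where b: "D \<subseteq> {..<b}"
    using D(1) finite_nat_bounded by blast
  define n where "n = b + m"
  have Pn: "finite (P n)" "P n \<subseteq> {n..}"
    using P(1) unfolding block_sequence_def by blast+
  with b have "P n \<inter> D = {}"
    unfolding n_def by fastforce
  define V where "V = cylinder (D \<union> P n) (code (B \<union> P n)) \<inter> code ` Pow X"
  have "openin ?T V"
    unfolding V_def openin_subtopology
    using openin_cylinder[of "D \<union> P n"] D(1) Pn(1) by blast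
  moreover have "code (B \<union> P n) \<in> V"
    using cylinder_self B(1) P(2)[of n] unfolding V_def by blast
  moreover have "cylinder (D \<union> P n) (code (B \<union> P n)) \<subseteq> cylinder D (code B)"
    using \<open>P n \<inter> D = {}\<close> by (auto simp: cylinder_def)
  then have "V \<subseteq> W"
    using D(2) U(2) unfolding V_def by blast
  moreover have "V \<inter> code ` ?F = {}"
  proof (rule equals0I)
    fix h assume "h \<in> V \<inter> code ` ?F"
    then obtain A where A: "code A \<in> V" "\<forall>k\<ge>m. \<not> P k \<subseteq> A"
      by blast
    then have "P n \<subseteq> A"
      unfolding V_def by (auto simp: cylinder_def)
    then show False
      using A(2) n_def by auto
  qed
  ultimately show "\<exists>V. openin ?T V \<and> V \<noteq> {} \<and> V \<subseteq> W \<and> V \<inter> code ` ?F = {}"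
    by blast
qed

lemma meager_fam_on_if_avoids:
  assumes "block_sequence P" "\<And>n. P n \<subseteq> X" "avoids L P" "\<And>A. A \<in> L \<Longrightarrow> A \<subseteq> X"
  shows "meager_fam_on X L"
  unfolding meager_fam_on_def meager_in_def
proof (intro exI conjI ballI)
  define N where "N m = code ` {A. A \<subseteq> X \<and> (\<forall>n\<ge>m. \<not> P n \<subseteq> A)}" for m
  show "countable (range N)" by simp
  show "nowhere_dense_in (subtopology cantor (code ` Pow X)) M" if "M \<in> range N" for M
    using that nowhere_dense_in_Pow_block_free[OF assms(1,2)] unfolding N_def by blast
  show "code ` L \<subseteq> \<Union>(range N)"
  proof
    fix c assume "c \<in> code ` L"
    then obtain A where A: "A \<in> L" "c = code A" by blast
    then obtain b where "{n. P n \<subseteq> A} \<subseteq> {..<b}"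
      using assms(3) finite_nat_bounded unfolding avoids_def by blast
    then have "c \<in> N b"
      unfolding N_def using A assms(4)[OF A(1)] by force
    then show "c \<in> \<Union>(range N)" by blast
  qed
qed

lemma meager_fam_if_avoids:
  assumes "block_sequence P" "avoids L P"
  shows "meager_fam L"
proof -
  have "meager_fam_on UNIV L"
    using meager_fam_on_if_avoids[OF assms(1) _ assms(2)] by blast
  moreover have "code ` Pow UNIV = topspace cantor"
    using range_code by simp
  ultimately show ?thesis
    unfolding meager_fam_on_def meager_fam_def by (metis subtopology_topspace)
qed

section \<open>Every meager family closed under subsets avoids some block sequence\<close>

lemma nowhere_dense_cylinder_escape:
  assumes "nowhere_dense_in cantor N"
  shows "\<exists>m' g. m \<le> m' \<and> (\<forall>i<m. g i = f i) \<and> cylinder {..<m'} g \<inter> N = {}"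
proof -
  obtain V where V: "openin cantor V" "V \<noteq> {}" "V \<subseteq> cylinder {..<m} f" "V \<inter> N = {}"
    using nowhere_dense_inD[OF assms openin_cylinder[of "{..<m}" f]] cylinder_self by blast
  obtain g where "g \<in> V"
    using V(2) by blast
  then obtain E where E: "finite E" "cylinder E g \<subseteq> V"
    using openin_cantor_cylinder_subset[OF V(1)] by blast
  obtain b where "E \<subseteq> {..<b}"
    using E(1) finite_nat_bounded by blast
  then have "cylinder {..<max m b} g \<subseteq> cylinder E g"
    by (intro cylinder_antimono) auto
  moreover have "\<forall>i<m. g i = f i"
    using \<open>g \<in> V\<close> V(3) by (auto simp: cylinder_def)
  ultimately show ?thesis
    using E(2) V(4) by (intro exI[of _ "max m b"] exI[of _ g]) auto
qed

lemma nowhere_dense_block_escape: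
  assumes "nowhere_dense_in cantor N" "u \<subseteq> {..<m}"
  shows "\<exists>m' s. m \<le> m' \<and> s \<subseteq> {m..<m'} \<and> (\<forall>A. A \<inter> {..<m'} = u \<union> s \<longrightarrow> code A \<notin> N)"
proof -
  obtain m' g where g: "m \<le> m'" "\<forall>i<m. g i = code u i" "cylinder {..<m'} g \<inter> N = {}"
    using nowhere_dense_cylinder_escape[OF assms(1), of m "code u"] by blast
  define s where "s = {i. m \<le> i \<and> i < m' \<and> g i}"
  have "code A \<notin> N" if A: "A \<inter> {..<m'} = u \<union> s" for A
  proof -
    have "i \<in> u \<union> s \<longleftrightarrow> i < m' \<and> g i" for i
    proof (cases "i < m")
      case True
      then show ?thesis
        using g(1,2) by (simp add: s_def)
    next
      case False
      then have "i \<notin> u"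
        using assms(2) by auto
      with False show ?thesis
        by (simp add: s_def)
    qed
    with A have "code A \<in> cylinder {..<m'} g"
      by (auto simp: cylinder_def)
    with g(3) show ?thesis by blast
  qed
  moreover have "s \<subseteq> {m..<m'}"
    by (auto simp: s_def)
  ultimately show ?thesis
    using g(1) by blast
qed

lemma Int_lessThan_eq_prefix:
  fixes A :: "nat set"
  assumes "A \<inter> {..<m'} = t \<union> s" "t \<subseteq> {..<m}" "s \<subseteq> {m..}" "m \<le> m'"
  shows "A \<inter> {..<m} = t"
proof -
  have "A \<inter> {..<m} = (A \<inter> {..<m'}) \<inter> {..<m}"
    using assms(4) by auto
  also have "\<dots> = t"
    unfolding assms(1) using assms(2,3) by auto
  finally show ?thesis .
qed

lemma finite_nowhere_dense_block_escape:
  assumes "finite Q" "\<And>u N. (u, N) \<in> Q \<Longrightarrow> u \<subseteq> {..<n} \<and> nowhere_dense_in cantor N"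
  shows "\<exists>m s. n < m \<and> s \<subseteq> {n..<m} \<and>
           (\<forall>(u, N)\<in>Q. \<forall>A. A \<inter> {..<m} = u \<union> s \<longrightarrow> code A \<notin> N)"
  using assms
proof (induction Q rule: finite_induct)
  case empty
  show ?case by (intro exI[of _ "Suc n"] exI[of _ "{}"]) auto
next
  case (insert q Q)
  obtain u N where q: "q = (u, N)" by (cases q)
  have "\<And>u N. (u, N) \<in> Q \<Longrightarrow> u \<subseteq> {..<n} \<and> nowhere_dense_in cantor N"
    using insert.prems by blast
  from insert.IH[OF this] obtain m s where ms: "n < m" "s \<subseteq> {n..<m}"
      and escQ: "\<forall>(u, N)\<in>Q. \<forall>A. A \<inter> {..<m} = u \<union> s \<longrightarrow> code A \<notin> N"
    by blast
  have "u \<subseteq> {..<n}" and N: "nowhere_dense_in cantor N"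
    using insert.prems[of u N] q by auto
  with ms have us: "u \<union> s \<subseteq> {..<m}"
    by auto
  obtain m' s' where ms': "m \<le> m'" "s' \<subseteq> {m..<m'}"
      and escq: "\<forall>A. A \<inter> {..<m'} = (u \<union> s) \<union> s' \<longrightarrow> code A \<notin> N"
    using nowhere_dense_block_escape[OF N us] by blast
  have esc: "\<forall>(u0, N0)\<in>insert q Q. \<forall>A. A \<inter> {..<m'} = u0 \<union> (s \<union> s') \<longrightarrow> code A \<notin> N0"
  proof clarify
    fix u0 N0 A assume uN: "(u0, N0) \<in> insert q Q" and A: "A \<inter> {..<m'} = u0 \<union> (s \<union> s')"
      and "code A \<in> N0"
    show False
    proof (cases "(u0, N0) = q")
      case True
      then show False
        using escq A q \<open>code A \<in> N0\<close> by (simp add: Un_assoc)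
    next
      case False
      with uN have "(u0, N0) \<in> Q" by simp
      then have "u0 \<union> s \<subseteq> {..<m}"
        using insert.prems[of u0 N0] ms by auto
      moreover have "A \<inter> {..<m'} = (u0 \<union> s) \<union> s'"
        using A by (simp add: Un_assoc)
      moreover have "s' \<subseteq> {m..}"
        using ms'(2) by auto
      ultimately have "A \<inter> {..<m} = u0 \<union> s"
        using Int_lessThan_eq_prefix[OF _ _ _ ms'(1)] by blast
      then show False
        using escQ \<open>(u0, N0) \<in> Q\<close> \<open>code A \<in> N0\<close> by blast
    qed
  qed
  have "n < m'" "s \<union> s' \<subseteq> {n..<m'}"
    using ms ms' by auto
  with esc show ?case
    by (intro exI[of _ m'] exI[of _ "s \<union> s'"] conjI)
qed

lemma nowhere_dense_escape_blocks:
  assumes "\<And>j. nowhere_dense_in cantor (G j)"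
  obtains b :: "nat \<Rightarrow> nat" and s where "strict_mono b" "\<And>k. s k \<subseteq> {b k..<b (Suc k)}"
    "\<And>k u j A. u \<subseteq> {..<b k} \<Longrightarrow> j \<le> k \<Longrightarrow> A \<inter> {..<b (Suc k)} = u \<union> s k \<Longrightarrow> code A \<notin> G j"
proof -
  define R where "R k x y \<longleftrightarrow> fst x < fst y \<and> snd y \<subseteq> {fst x..<fst y} \<and>
      (\<forall>u j A. u \<subseteq> {..<fst x} \<longrightarrow> j \<le> k \<longrightarrow> A \<inter> {..<fst y} = u \<union> snd y \<longrightarrow> code A \<notin> G j)"
    for k :: nat and x y :: "nat \<times> nat set"
  have "\<exists>y. R k x y" for k x
  proof -
    let ?Q = "Pow {..<fst x} \<times> G ` {..k}"
    have "u \<subseteq> {..<fst x} \<and> nowhere_dense_in cantor N" if "(u, N) \<in> ?Q" for u N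
      using that assms by auto
    then obtain m s where "fst x < m" "s \<subseteq> {fst x..<m}"
        and esc: "\<forall>(u, N)\<in>?Q. \<forall>A. A \<inter> {..<m} = u \<union> s \<longrightarrow> code A \<notin> N"
      using finite_nowhere_dense_block_escape[of ?Q "fst x"] by blast
    moreover have "code A \<notin> G j"
      if "u \<subseteq> {..<fst x}" "j \<le> k" "A \<inter> {..<m} = u \<union> s" for u j A
    proof -
      have "(u, G j) \<in> ?Q" using that(1,2) by simp
      then show ?thesis using esc that(3) by blast
    qed
    ultimately have "R k x (m, s)"
      unfolding R_def by simp
    then show ?thesis ..
  qed
  then have "\<exists>f. \<forall>k. True \<and> R k (f k) (f (Suc k))"
    by (intro dependent_nat_choice) auto
  then obtain f where f: "\<And>k. R k (f k) (f (Suc k))"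
    by auto
  show thesis
  proof (rule that[of "fst \<circ> f" "\<lambda>k. snd (f (Suc k))"])
    show "strict_mono (fst \<circ> f)"
      using f unfolding R_def by (simp add: strict_mono_Suc_iff)
    show "snd (f (Suc k)) \<subseteq> {(fst \<circ> f) k..<(fst \<circ> f) (Suc k)}" for k
      using f[of k] unfolding R_def by simp
    show "code A \<notin> G j"
      if "u \<subseteq> {..<(fst \<circ> f) k}" "j \<le> k" "A \<inter> {..<(fst \<circ> f) (Suc k)} = u \<union> snd (f (Suc k))"
      for k u j A
      using f[of k] that unfolding R_def by simp
  qed
qed

lemma strict_mono_interval_unique:
  assumes "strict_mono b" "i \<in> {b k..<b (Suc k)}" "i \<in> {b k'..<b (Suc k')}"
  shows "k = k'"
proof (rule linorder_cases[of k k'])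
  assume "k < k'"
  then have "b (Suc k) \<le> b k'"
    using assms(1) by (simp add: strict_mono_less_eq)
  with assms(2,3) show ?thesis by auto
next
  assume "k' < k"
  then have "b (Suc k') \<le> b k"
    using assms(1) by (simp add: strict_mono_less_eq)
  with assms(2,3) show ?thesis by auto
qed

text \<open>
  A member of \<open>L\<close> containing infinitely many blocks is thinned, inside \<open>L\<close>, to agree with
  \<open>s k\<close> on each of these blocks; the thinned set lies in some \<open>G j\<close>, which the escape
  property forbids at any such block \<open>k \<ge> j\<close>.
\<close>
lemma avoids_if_escape_blocks:
  assumes down: "\<And>A B. A \<in> L \<Longrightarrow> B \<subseteq> A \<Longrightarrow> B \<in> L"
    and cover: "code ` L \<subseteq> (\<Union>j. G j)"
    and b: "strict_mono b" and s: "\<And>k. s k \<subseteq> {b k..<b (Suc k)}"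
    and esc: "\<And>k u j A. u \<subseteq> {..<b k} \<Longrightarrow> j \<le> k \<Longrightarrow> A \<inter> {..<b (Suc k)} = u \<union> s k \<Longrightarrow> code A \<notin> G j"
  shows "avoids L (\<lambda>k. {b k..<b (Suc k)})"
  unfolding avoids_def
proof (rule ballI, rule ccontr)
  fix A assume "A \<in> L" and "infinite {k. {b k..<b (Suc k)} \<subseteq> A}"
  define K where "K = {k. {b k..<b (Suc k)} \<subseteq> A}"
  define A' where "A' = A - (\<Union>k\<in>K. {b k..<b (Suc k)} - s k)"
  have "A' \<in> L"
    using down[OF \<open>A \<in> L\<close>] unfolding A'_def by blast
  then obtain j where j: "code A' \<in> G j"
    using cover by blast
  obtain k where "k \<in> K" "j \<le> k"
    using \<open>infinite {k. {b k..<b (Suc k)} \<subseteq> A}\<close>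
    unfolding K_def[symmetric] infinite_nat_iff_unbounded_le by blast
  have "A' \<inter> {b k..<b (Suc k)} = s k"
  proof
    show "A' \<inter> {b k..<b (Suc k)} \<subseteq> s k"
      using \<open>k \<in> K\<close> unfolding A'_def by blast
    show "s k \<subseteq> A' \<inter> {b k..<b (Suc k)}"
    proof
      fix i assume "i \<in> s k"
      then have i: "i \<in> {b k..<b (Suc k)}"
        using s by blast
      then have "i \<in> A"
        using \<open>k \<in> K\<close> unfolding K_def by blast
      moreover have "k' = k" if "i \<in> {b k'..<b (Suc k')}" for k'
        using strict_mono_interval_unique[OF b that i] .
      ultimately show "i \<in> A' \<inter> {b k..<b (Suc k)}"
        using i \<open>i \<in> s k\<close> unfolding A'_def by blast
    qed
  qed
  moreover have "{..<b (Suc k)} = {..<b k} \<union> {b k..<b (Suc k)}"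
    using b by (auto simp: strict_mono_Suc_iff intro: less_trans)
  ultimately have "A' \<inter> {..<b (Suc k)} = (A' \<inter> {..<b k}) \<union> s k"
    by blast
  with \<open>j \<le> k\<close> have "code A' \<notin> G j"
    by (intro esc) auto
  with j show False
    by contradiction
qed

lemma meager_in_imp_nowhere_dense_sequence:
  assumes "meager_in X S"
  obtains G :: "nat \<Rightarrow> 'a set" where "\<And>j. nowhere_dense_in X (G j)" "S \<subseteq> (\<Union>j. G j)"
proof -
  obtain F where F: "countable F" "\<forall>N\<in>F. nowhere_dense_in X N" "S \<subseteq> \<Union>F"
    using assms unfolding meager_in_def by blast
  define G where "G = from_nat_into (insert {} F)"
  have "range G = insert {} F"
    unfolding G_def using F(1) by (simp add: range_from_nat_into)
  moreover have "nowhere_dense_in X {}"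
    by (simp add: nowhere_dense_in_def)
  ultimately show thesis
    using that[of G] F(2,3) by (metis UN_insert Un_upper2 insert_iff rangeI subset_trans Union_insert)
qed

lemma avoids_if_meager_fam:
  assumes down: "\<And>A B. A \<in> L \<Longrightarrow> B \<subseteq> A \<Longrightarrow> B \<in> L" and "meager_fam L"
  shows "\<exists>P. block_sequence P \<and> avoids L P"
proof -
  obtain G :: "nat \<Rightarrow> (nat \<Rightarrow> bool) set"
    where G: "\<And>j. nowhere_dense_in cantor (G j)" "code ` L \<subseteq> (\<Union>j. G j)"
    using assms(2) unfolding meager_fam_def by (rule meager_in_imp_nowhere_dense_sequence) blast
  show ?thesis
  proof (rule nowhere_dense_escape_blocks[OF G(1)])
    fix b :: "nat \<Rightarrow> nat" and s
    assume escape: "strict_mono b" "\<And>k. s k \<subseteq> {b k..<b (Suc k)}"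
      "\<And>k u j A. u \<subseteq> {..<b k} \<Longrightarrow> j \<le> k \<Longrightarrow> A \<inter> {..<b (Suc k)} = u \<union> s k \<Longrightarrow> code A \<notin> G j"
    have "block_sequence (\<lambda>k. {b k..<b (Suc k)})"
      using escape(1) by (rule strict_mono_block_sequence)
    moreover have "avoids L (\<lambda>k. {b k..<b (Suc k)})"
      using down G(2) escape by (rule avoids_if_escape_blocks)
    ultimately show ?thesis
      by blast
  qed
qed

lemma ideal_empty: "is_ideal L \<Longrightarrow> {} \<in> L"
  unfolding is_ideal_def by blast

lemma ideal_subset: "is_ideal L \<Longrightarrow> A \<in> L \<Longrightarrow> B \<subseteq> A \<Longrightarrow> B \<in> L"
  unfolding is_ideal_def by blast

lemma ideal_Un: "is_ideal L \<Longrightarrow> A \<in> L \<Longrightarrow> B \<in> L \<Longrightarrow> A \<union> B \<in> L"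
  unfolding is_ideal_def by blast

lemma MI_iff_avoids: "I \<in> MI \<longleftrightarrow> is_ideal I \<and> (\<exists>P. block_sequence P \<and> avoids I P)"
proof
  assume "I \<in> MI"
  then have "is_ideal I" "meager_fam I"
    by (simp_all add: MI_def)
  moreover have "\<exists>P. block_sequence P \<and> avoids I P"
    using avoids_if_meager_fam[OF ideal_subset[OF \<open>is_ideal I\<close>] \<open>meager_fam I\<close>] .
  ultimately show "is_ideal I \<and> (\<exists>P. block_sequence P \<and> avoids I P)"
    by blast
next
  assume "is_ideal I \<and> (\<exists>P. block_sequence P \<and> avoids I P)"
  then show "I \<in> MI"
    unfolding MI_def using meager_fam_if_avoids by blast
qed

lemma is_ideal_Union_chain:
  assumes "C \<noteq> {}" "\<And>J. J \<in> C \<Longrightarrow> is_ideal J" "\<And>J J'. J \<in> C \<Longrightarrow> J' \<in> C \<Longrightarrow> J \<subseteq> J' \<or> J' \<subseteq> J"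
  shows "is_ideal (\<Union>C)"
  unfolding is_ideal_def
proof (intro conjI allI impI)
  fix A B assume "A \<in> \<Union>C" "B \<subseteq> A"
  then show "B \<in> \<Union>C"
    using assms(2) ideal_subset by blast
next
  fix A B assume "A \<in> \<Union>C" "B \<in> \<Union>C"
  then obtain J J' where "J \<in> C" "A \<in> J" "J' \<in> C" "B \<in> J'"
    by blast
  with assms(2) assms(3)[of J J'] show "A \<union> B \<in> \<Union>C"
    using ideal_Un by blast
next
  fix A :: "nat set" assume "finite A"
  obtain J where "J \<in> C"
    using assms(1) by blast
  with assms(2) \<open>finite A\<close> show "A \<in> \<Union>C"
    unfolding is_ideal_def by blast
next
  show "UNIV \<notin> \<Union>C"
    using assms(2) unfolding is_ideal_def by blast
qed

definition ideal_join :: "nat set set \<Rightarrow> nat set set \<Rightarrow> nat set set" where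
  "ideal_join L J = {C. \<exists>A\<in>L. \<exists>B\<in>J. C \<subseteq> A \<union> B}"

lemma ideal_join_upper1: "{} \<in> J \<Longrightarrow> L \<subseteq> ideal_join L J"
  unfolding ideal_join_def by blast

lemma ideal_join_upper2: "{} \<in> L \<Longrightarrow> J \<subseteq> ideal_join L J"
  unfolding ideal_join_def by blast

lemma ideal_join_least: "is_ideal K \<Longrightarrow> L \<subseteq> K \<Longrightarrow> J \<subseteq> K \<Longrightarrow> ideal_join L J \<subseteq> K"
  unfolding ideal_join_def using ideal_Un ideal_subset by blast

lemma ideal_join_assoc_subset: "ideal_join L (ideal_join J M) \<subseteq> ideal_join (ideal_join L J) M"
  unfolding ideal_join_def by blast

lemma ideal_join_Union: "ideal_join L (\<Union>C) = (\<Union>J\<in>C. ideal_join L J)"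
  unfolding ideal_join_def by blast

lemma is_ideal_ideal_join:
  assumes "is_ideal L" "{} \<in> J" "\<And>A B. A \<in> J \<Longrightarrow> B \<in> J \<Longrightarrow> A \<union> B \<in> J"
    and "UNIV \<notin> ideal_join L J"
  shows "is_ideal (ideal_join L J)"
  unfolding is_ideal_def
proof (intro conjI allI impI assms(4))
  fix A B assume "A \<in> ideal_join L J" "B \<subseteq> A"
  then show "B \<in> ideal_join L J"
    unfolding ideal_join_def by blast
next
  fix A B assume "A \<in> ideal_join L J" "B \<in> ideal_join L J"
  then obtain A1 B1 A2 B2 where AB: "A1 \<in> L" "B1 \<in> J" "A2 \<in> L" "B2 \<in> J"
      and "A \<union> B \<subseteq> (A1 \<union> A2) \<union> (B1 \<union> B2)"
    unfolding ideal_join_def by blast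
  moreover have "A1 \<union> A2 \<in> L" "B1 \<union> B2 \<in> J"
    using ideal_Un[OF assms(1) AB(1,3)] assms(3)[OF AB(2,4)] .
  ultimately show "A \<union> B \<in> ideal_join L J"
    unfolding ideal_join_def by blast
next
  fix A :: "nat set" assume "finite A"
  then have "A \<in> L"
    using assms(1) unfolding is_ideal_def by blast
  then show "A \<in> ideal_join L J"
    using ideal_join_upper1[OF assms(2)] by blast
qed

lemma meager_fam_on_subset: "meager_fam_on X M \<Longrightarrow> N \<subseteq> M \<Longrightarrow> meager_fam_on X N"
  unfolding meager_fam_on_def meager_in_def by (meson image_mono order_trans)

lemma nonmeager_restr_catches_blocks:
  assumes P: "block_sequence P"
    and N: "infinite N" "\<And>n. n \<in> N \<Longrightarrow> P n \<subseteq> A \<union> X" "\<And>n. n \<in> N \<Longrightarrow> P n \<inter> X \<noteq> {}"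
    and nonmeager: "\<not> meager_fam_on X (restr L X)"
  shows "\<exists>B\<in>L. B \<subseteq> X \<and> infinite {n. P n \<subseteq> A \<union> B}"
proof -
  define e where "e = enumerate N"
  have e: "strict_mono e" "\<And>k. e k \<in> N"
    unfolding e_def using N(1) by (simp_all add: strict_mono_enumerate enumerate_in_set)
  define Q where "Q k = P (e k) \<inter> X" for k
  have "block_sequence Q"
    unfolding Q_def using P e(1) N(3)[OF e(2)] by (rule block_sequence_subsequence)
  moreover have "\<And>k. Q k \<subseteq> X" "\<And>B. B \<in> restr L X \<Longrightarrow> B \<subseteq> X"
    unfolding Q_def restr_def by auto
  ultimately have "\<not> avoids (restr L X) Q"
    using nonmeager meager_fam_on_if_avoids[of Q X "restr L X"] by blast
  then obtain B where B: "B \<in> L" "B \<subseteq> X" "infinite {k. Q k \<subseteq> B}"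
    unfolding avoids_def restr_def by blast
  have "e ` {k. Q k \<subseteq> B} \<subseteq> {n. P n \<subseteq> A \<union> B}"
    using N(2)[OF e(2)] unfolding Q_def by blast
  moreover have "infinite (e ` {k. Q k \<subseteq> B})"
    using B(3) strict_mono_imp_inj_on[OF e(1)] by (simp add: finite_image_iff inj_on_subset)
  ultimately show ?thesis
    using B(1,2) finite_subset by blast
qed

lemma avoids_ideal_join_Pow:
  assumes L: "is_ideal L" and P: "block_sequence P" "avoids L P"
    and nonmeager: "\<not> meager_fam_on X (restr L X)"
  shows "avoids (ideal_join L (Pow X)) P"
  unfolding avoids_def
proof (rule ballI, rule ccontr)
  fix C assume "C \<in> ideal_join L (Pow X)" and "infinite {n. P n \<subseteq> C}"
  then obtain A where "A \<in> L" "C \<subseteq> A \<union> X"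
    unfolding ideal_join_def by blast
  define N where "N = {n. P n \<subseteq> A \<union> X \<and> \<not> P n \<subseteq> A}"
  have "{n. P n \<subseteq> C} \<subseteq> N \<union> {n. P n \<subseteq> A}"
    using \<open>C \<subseteq> A \<union> X\<close> unfolding N_def by blast
  moreover have "finite {n. P n \<subseteq> A}"
    using P(2) \<open>A \<in> L\<close> unfolding avoids_def by blast
  ultimately have "infinite N"
    using \<open>infinite {n. P n \<subseteq> C}\<close> by (meson finite_Un finite_subset)
  moreover have "P n \<subseteq> A \<union> X" "P n \<inter> X \<noteq> {}" if "n \<in> N" for n
    using that unfolding N_def by blast+
  ultimately obtain B where "B \<in> L" "infinite {n. P n \<subseteq> A \<union> B}"
    using nonmeager_restr_catches_blocks[OF P(1) _ _ _ nonmeager] by blast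
  moreover have "A \<union> B \<in> L"
    using ideal_Un[OF L \<open>A \<in> L\<close> \<open>B \<in> L\<close>] .
  ultimately show False
    using P(2) unfolding avoids_def by blast
qed

lemma is_ideal_ideal_join_if_avoids:
  assumes "is_ideal L" "is_ideal J" "block_sequence P" "avoids (ideal_join L J) P"
  shows "is_ideal (ideal_join L J)"
  using assms(1) ideal_empty[OF assms(2)] ideal_Un[OF assms(2)] avoids_imp_UNIV_notin[OF assms(3,4)]
  by (rule is_ideal_ideal_join)

section \<open>Meager-preserving extensions\<close>

definition meager_preserving :: "nat set set \<Rightarrow> nat set set set" where
  "meager_preserving I = {J. is_ideal J \<and> I \<subseteq> J \<and>
     (\<forall>L P. is_ideal L \<longrightarrow> I \<subseteq> L \<longrightarrow> block_sequence P \<longrightarrow> avoids L P \<longrightarrow> avoids (ideal_join L J) P)}"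

lemma meager_preservingD:
  assumes "J \<in> meager_preserving I"
  shows "is_ideal J" "I \<subseteq> J"
    "\<And>L P. is_ideal L \<Longrightarrow> I \<subseteq> L \<Longrightarrow> block_sequence P \<Longrightarrow> avoids L P \<Longrightarrow> avoids (ideal_join L J) P"
  using assms unfolding meager_preserving_def by blast+

lemma meager_preserving_self:
  assumes "is_ideal I"
  shows "I \<in> meager_preserving I"
  unfolding meager_preserving_def
proof (intro CollectI conjI allI impI assms subset_refl)
  fix L P assume "is_ideal L" "I \<subseteq> L" "avoids L P"
  then show "avoids (ideal_join L I) P"
    using ideal_join_least[of L L I] avoids_antimono by blast
qed

lemma meager_preserving_Union_chain:
  assumes "C \<noteq> {}" "subset.chain (meager_preserving I) C"
  shows "\<Union>C \<in> meager_preserving I"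
proof -
  have C: "C \<subseteq> meager_preserving I" "\<And>J J'. J \<in> C \<Longrightarrow> J' \<in> C \<Longrightarrow> J \<subseteq> J' \<or> J' \<subseteq> J"
    using assms(2) unfolding subset.chain_def by blast+
  have "is_ideal (\<Union>C)"
    using assms(1) C meager_preservingD(1) by (blast intro: is_ideal_Union_chain)
  moreover have "I \<subseteq> \<Union>C"
    using assms(1) C(1) meager_preservingD(2) by blast
  moreover have "avoids (ideal_join L (\<Union>C)) P"
    if "is_ideal L" "I \<subseteq> L" "block_sequence P" "avoids L P" for L P
    using C(1) meager_preservingD(3)[OF _ that] unfolding ideal_join_Union avoids_def by blast
  ultimately show ?thesis
    unfolding meager_preserving_def by blast
qed

lemma ex_maximal_meager_preserving:
  assumes "is_ideal I"
  shows "\<exists>J\<in>meager_preserving I. \<forall>J'\<in>meager_preserving I. J \<subseteq> J' \<longrightarrow> J' = J"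
  using meager_preserving_self[OF assms] meager_preserving_Union_chain
  by (intro subset_Zorn_nonempty) blast+

lemma meager_preserving_join_Pow:
  assumes I: "I \<in> MI" and J: "J \<in> meager_preserving I"
    and nonmeager: "\<not> meager_fam_on X (restr J X)"
  shows "ideal_join J (Pow X) \<in> meager_preserving I"
proof -
  let ?J' = "ideal_join J (Pow X)"
  have "is_ideal J" "I \<subseteq> J"
    using J by (rule meager_preservingD)+
  have avoid: "avoids (ideal_join L ?J') P"
    if L: "is_ideal L" "I \<subseteq> L" and P: "block_sequence P" "avoids L P" for L P
  proof -
    let ?L' = "ideal_join L J"
    have "avoids ?L' P"
      using meager_preservingD(3)[OF J L P] .
    then have "is_ideal ?L'"
      using L(1) \<open>is_ideal J\<close> P(1) by (intro is_ideal_ideal_join_if_avoids)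
    moreover have "restr J X \<subseteq> restr ?L' X"
      using ideal_join_upper2[OF ideal_empty[OF L(1)]] unfolding restr_def by blast
    then have "\<not> meager_fam_on X (restr ?L' X)"
      using nonmeager meager_fam_on_subset by blast
    ultimately have "avoids (ideal_join ?L' (Pow X)) P"
      using avoids_ideal_join_Pow[OF _ P(1) \<open>avoids ?L' P\<close>] by blast
    then show ?thesis
      using ideal_join_assoc_subset by (rule avoids_antimono[rotated])
  qed
  obtain P0 where P0: "block_sequence P0" "avoids I P0"
    using I unfolding MI_iff_avoids by blast
  have "is_ideal I"
    using I unfolding MI_def by blast
  then have "UNIV \<notin> ideal_join I ?J'"
    using avoids_imp_UNIV_notin[OF P0(1) avoid[OF _ subset_refl P0]] by blast
  then have "UNIV \<notin> ?J'"
    using ideal_join_upper2[OF ideal_empty[OF \<open>is_ideal I\<close>]] by blast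
  then have "is_ideal ?J'"
    by (intro is_ideal_ideal_join \<open>is_ideal J\<close>) auto
  moreover have "I \<subseteq> ?J'"
    using \<open>I \<subseteq> J\<close> ideal_join_upper1[of "Pow X" J] by blast
  ultimately show ?thesis
    unfolding meager_preserving_def using avoid by blast
qed

lemma MH_if_maximal_meager_preserving:
  assumes I: "I \<in> MI" and J: "J \<in> meager_preserving I"
    and max: "\<And>J'. J' \<in> meager_preserving I \<Longrightarrow> J \<subseteq> J' \<Longrightarrow> J' = J"
  shows "J \<in> MH"
  unfolding MH_def
proof (intro CollectI conjI allI impI)
  show "is_ideal J"
    using J by (rule meager_preservingD)
  fix X assume "X \<notin> J"
  show "meager_fam_on X (restr J X)"
  proof (rule ccontr)
    assume "\<not> meager_fam_on X (restr J X)"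
    then have "ideal_join J (Pow X) = J"
      using meager_preserving_join_Pow[OF I J] ideal_join_upper1[of "Pow X" J] max by blast
    moreover have "X \<in> ideal_join J (Pow X)"
      using ideal_empty[OF \<open>is_ideal J\<close>] unfolding ideal_join_def by blast
    ultimately show False
      using \<open>X \<notin> J\<close> by simp
  qed
qed

lemma ideal_join_meager_preserving_in_MI:
  assumes "L \<in> MI" "I \<subseteq> L" "J \<in> meager_preserving I"
  shows "ideal_join L J \<in> MI"
proof -
  obtain P where P: "block_sequence P" "avoids L P" and "is_ideal L"
    using assms(1) unfolding MI_iff_avoids by blast
  have "avoids (ideal_join L J) P"
    using meager_preservingD(3)[OF assms(3) \<open>is_ideal L\<close> assms(2) P] .
  moreover have "is_ideal (ideal_join L J)"
    using \<open>is_ideal L\<close> meager_preservingD(1)[OF assms(3)] P(1) calculation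
    by (rule is_ideal_ideal_join_if_avoids)
  ultimately show ?thesis
    unfolding MI_iff_avoids using P(1) by blast
qed

lemma compatible_ideals_meager_preserving_iff:
  assumes "J \<in> meager_preserving I"
  shows "compatible_ideals K J \<longleftrightarrow> compatible_ideals K I"
proof
  assume "compatible_ideals K J"
  then show "compatible_ideals K I"
    using meager_preservingD(2)[OF assms] unfolding compatible_ideals_def by blast
next
  assume "compatible_ideals K I"
  then obtain L where L: "L \<in> MI" "K \<subseteq> L" "I \<subseteq> L"
    unfolding compatible_ideals_def by blast
  have "is_ideal L" "is_ideal J"
    using L(1) meager_preservingD(1)[OF assms] unfolding MI_def by blast+
  then have "L \<subseteq> ideal_join L J" "J \<subseteq> ideal_join L J"
    by (simp_all add: ideal_join_upper1 ideal_join_upper2 ideal_empty)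
  with L show "compatible_ideals K J"
    unfolding compatible_ideals_def
    using ideal_join_meager_preserving_in_MI[OF L(1,3) assms] by blast
qed

theorem mainTheorem7:
  shows "\<exists>\<Phi>. \<forall>I\<in>MI. \<Phi> I \<in> MH \<and> I \<subseteq> \<Phi> I \<and> sep_equiv (\<Phi> I) I"
proof -
  have "\<exists>J. J \<in> MH \<and> I \<subseteq> J \<and> sep_equiv J I" if I: "I \<in> MI" for I
  proof -
    have "is_ideal I"
      using I by (simp add: MI_def)
    then obtain J where J: "J \<in> meager_preserving I"
      and max: "\<forall>J'\<in>meager_preserving I. J \<subseteq> J' \<longrightarrow> J' = J"
      using ex_maximal_meager_preserving by blast
    have "J \<in> MH"
      using MH_if_maximal_meager_preserving[OF I J] max by blast
    moreover have "sep_equiv J I"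
      unfolding sep_equiv_def disjoint_ideals_def
      using compatible_ideals_meager_preserving_iff[OF J] by blast
    ultimately show ?thesis
      using meager_preservingD(2)[OF J] by blast
  qed
  then show ?thesis
    by (rule bchoice[OF ballI])
qed

end
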